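(* Let $(L,\vee,\wedge,0,1)$ be a complemented lattice with $0\ne1$ and consider the statements: (i) $x^+\vee y^+\le_1(x\wedge y)^+$ for all $x,y\in L$; (ii) for all $x,y\in L$, $x\le y$ implies $y^+\le_1x^+$; (iii) $(x\vee y)^+\le_1x^+\wedge y^+$ for all $x,y\in L$. Then (i) implies (ii), and (ii) is equivalent to (iii).
   Context: For $a\in L$, $a^+:=\{x\in L\mid a\vee x=1,\ a\wedge x=0\}$ (the set of all complements of $a$). For $A,B\subseteq L$: $A\vee B:=\{x\vee y\mid x\in A,y\in B\}$, $A\wedge B:=\{x\wedge y\mid x\in A,y\in B\}$, and $A\le_1B$ means that for every $x\in A$ there exists $y\in B$ with $x\le y$. *)

theory Defs
  imports Main
begin

definition compls :: "'a::bounded_lattice \<Rightarrow> 'a set" where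
  "compls a = {x. sup a x = top \<and> inf a x = bot}"

definition set_sup :: "'a::lattice set \<Rightarrow> 'a set \<Rightarrow> 'a set" where
  "set_sup A B = {sup x y | x y. x \<in> A \<and> y \<in> B}"

definition set_inf :: "'a::lattice set \<Rightarrow> 'a set \<Rightarrow> 'a set" where
  "set_inf A B = {inf x y | x y. x \<in> A \<and> y \<in> B}"

definition le1 :: "'a::order set \<Rightarrow> 'a set \<Rightarrow> bool" where
  "le1 A B \<longleftrightarrow> (\<forall>x\<in>A. \<exists>y\<in>B. x \<le> y)"

end

theory Submission
  imports Defs
begin

(* All three implications rest on two facts about domination of sets,
  A \<le>\<^sub>1 B: since a \<le> a \<or> b, a set A is dominated by whatever dominates A \<or> B, as soon
  as B is nonempty (here B is a set of complements, nonempty by complementedness); and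
  since z \<le> a \<and> b iff z \<le> a and z \<le> b, being dominated by B \<and> C is the same as being
  dominated by B and by C. *)

lemma le1_set_supD1:
  assumes "le1 (set_sup A B) C" and "B \<noteq> {}"
  shows "le1 A C"
  unfolding le1_def
proof
  fix a assume "a \<in> A"
  obtain b where "b \<in> B" using \<open>B \<noteq> {}\<close> by blast
  with \<open>a \<in> A\<close> have "sup a b \<in> set_sup A B" unfolding set_sup_def by blast
  then obtain c where "c \<in> C" "sup a b \<le> c" using assms(1) unfolding le1_def by blast
  then show "\<exists>c\<in>C. a \<le> c" by (meson le_supE)
qed

lemma le1_set_infI:
  assumes "le1 A B" and "le1 A C"
  shows "le1 A (set_inf B C)"
  unfolding le1_def
proof
  fix z assume "z \<in> A"
  then obtain b c where "b \<in> B" "z \<le> b" "c \<in> C" "z \<le> c" using assms unfolding le1_def by blast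
  then have "inf b c \<in> set_inf B C" and "z \<le> inf b c" unfolding set_inf_def by auto
  then show "\<exists>w\<in>set_inf B C. z \<le> w" by blast
qed

lemma le1_set_infD1:
  assumes "le1 A (set_inf B C)"
  shows "le1 A B"
  using assms unfolding le1_def set_inf_def by (fastforce dest: le_infE)

theorem proposition3:
  assumes complemented: "\<And>a::'a::bounded_lattice. compls a \<noteq> {}"
    and nontriv: "(bot::'a) \<noteq> top"
  shows "((\<forall>x y::'a. le1 (set_sup (compls x) (compls y)) (compls (inf x y)))
            \<longrightarrow> (\<forall>x y::'a. x \<le> y \<longrightarrow> le1 (compls y) (compls x)))
       \<and> ((\<forall>x y::'a. x \<le> y \<longrightarrow> le1 (compls y) (compls x))
            \<longleftrightarrow> (\<forall>x y::'a. le1 (compls (sup x y)) (set_inf (compls x) (compls y))))"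
proof (intro conjI impI allI iffI)
  fix x y :: 'a
  assume "\<forall>x y::'a. le1 (set_sup (compls x) (compls y)) (compls (inf x y))" and "x \<le> y"
  then have "le1 (set_sup (compls y) (compls x)) (compls x)"
    by (metis inf_absorb2)
  then show "le1 (compls y) (compls x)" using complemented by (rule le1_set_supD1)
next
  fix x y :: 'a
  assume "\<forall>x y::'a. x \<le> y \<longrightarrow> le1 (compls y) (compls x)"
  then show "le1 (compls (sup x y)) (set_inf (compls x) (compls y))"
    by (simp add: le1_set_infI)
next
  fix x y :: 'a
  assume "\<forall>x y::'a. le1 (compls (sup x y)) (set_inf (compls x) (compls y))" and "x \<le> y"
  then have "le1 (compls y) (set_inf (compls x) (compls y))"
    by (metis sup_absorb2)
  then show "le1 (compls y) (compls x)" by (rule le1_set_infD1)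
qed

end
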